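(* Let $d>d_{\min}$, $n\in\mathbb{N}_+$, $\epsilon\in[0,1]$, and let $\mathcal{S}$ be any $(n,d,\epsilon,\mathcal{A})$ sampling (the case $k=1$). Let $(W,T,H)$ have joint law $P^{\mathcal{A}}_{H|T}P^{\mathcal{S}}_{T|W}P_W$. Then $$\epsilon \;\ge\; \sup_{\gamma\ge 0}\Big\{\mathbb{P}\big[\jmath_W(W,H,d,\mathcal{A})\ge bn+\gamma\big]-e^{-\gamma}\Big\}.$$
   Context: Framework. $\mathcal{W}$ is a countable set and $W\sim P_W$ on $\mathcal{W}$. For $k\in\mathbb{N}_+$, $W^k=(W_1,\dots,W_k)$ has i.i.d. components with law $P_W$. $\mathcal{H}$ is a countable set of hypotheses. Each training sample is described by a fixed number $b\in\mathbb{N}_+$ of bits. $\mathcal{T}_n$ denotes the set of all training datasets of size $n$, and $|\mathcal{T}_n|=2^{bn}$. A sampling strategy $\mathcal{S}$ is a Markov kernel $P^{\mathcal{S}}_{T|W^k}$ from $\mathcal{W}^k$ to training datasets. A randomized learning algorithm $\mathcal{A}$ is a fixed Markov kernel $P^{\mathcal{A}}_{H|T}$ from training datasets to $\mathcal{H}$. The hypothesis is $H=\mathcal{A}(\mathcal{S}(W^k))$, so that $W^k\to T\to H$ is a Markov chain. The distortion $\mathsf{d}:\mathcal{W}\times\mathcal{H}\to[0,\infty)$ is bounded (Assumption (I)), and $\mathsf{d}(w^k;h):=\frac1k\sum_{i=1}^k\mathsf{d}(w_i;h)$. All logarithms are natural. $(k,n,d,\epsilon,\mathcal{A})$ sampling: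 a sampling strategy $\mathcal{S}$ such that $|\mathcal{S}(W^k)|=n$ almost surely and $\mathbb{P}[\mathsf{d}(W^k;\mathcal{A}(\mathcal{S}(W^k)))>d]\le\epsilon$. For $k=1$ it is called an $(n,d,\epsilon,\mathcal{A})$ sampling. Rate-distortion quantity (for $k=1$): $$\mathbb{R}_W(d,\mathcal{A}):=\inf_{P^{\mathcal{S}}_{T|W}:\ \mathbb{E}_{P^{\mathcal{A}}_{H|T}P^{\mathcal{S}}_{T|W}P_W}[\mathsf{d}(W;H)]\le d}\ \mathbb{I}(W;H).$$ $d_{\min}:=\inf\{d:\mathbb{R}_W(d,\mathcal{A})<\infty\}$ is assumed to exist and be finite (Assumption (II)). Assumption (III): there is an optimal sampling strategy $\mathcal{S}^*$, with kernel $P^{\mathcal{S}^*}_{T|W}$, attaining the infimum and satisfying $\mathbb{E}[\mathsf{d}(W;\mathcal{A}(\mathcal{S}^*(W)))]=d$. $H^{\mathcal{S}^*}_{\mathcal{A}}$ denotes the hypothesis with joint law $P^{\mathcal{A},\mathcal{S}^*}_{H|W}P_W$, where $P^{\mathcal{A},\mathcal{S}^*}_{H|W}(h|w)=\sum_t P^{\mathcal{A}}_{H|T}(h|t)P^{\mathcal{S}^*}_{T|W}(t|w)$. Information density: $\iota_{W;H^{\mathcal{S}^*}_{\mathcal{A}}}(w;h):=\log\frac{\mathrm{d}P_{WH}}{\mathrm{d}(P_W\times P_H)}(w,h)$, computed under this joint law. $\lambda^*_{\mathcal{A}}(d):=-\frac{\mathrm{d}\mathbb{R}_W(d,\mathcal{A})}{\mathrm{d}d}>0$.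 The $\mathcal{A}$-specified $d$-tilted information is $$\jmath_W(w,h,d,\mathcal{A}):=\iota_{W;H^{\mathcal{S}^*}_{\mathcal{A}}}(w;h)+\lambda^*_{\mathcal{A}}(d)\big(\mathsf{d}(w;h)-d\big).$$ *)

theory Defs
  imports "HOL-Probability.Probability"
begin

text \<open>Training samples are bit strings of length b; a training dataset is a list of samples.\<close>

definition datasets :: "nat \<Rightarrow> nat \<Rightarrow> bool list list set" where
  "datasets b n = {t. length t = n \<and> (\<forall>x\<in>set t. length x = b)}"

definition all_datasets :: "nat \<Rightarrow> bool list list set" where
  "all_datasets b = {t. \<forall>x\<in>set t. length x = b}"

definition joint :: "'w pmf \<Rightarrow> ('w \<Rightarrow> 't pmf) \<Rightarrow> ('t \<Rightarrow> 'h pmf) \<Rightarrow> ('w \<times> 'h) pmf" where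
  "joint PW S A = bind_pmf PW (\<lambda>w. bind_pmf (S w) (\<lambda>t. map_pmf (\<lambda>h. (w, h)) (A t)))"

text \<open>Log-ratio dP_WH / d(P_W x P_H) (meaningful on the support of the joint law).\<close>
definition log_ratio :: "('w \<times> 'h) pmf \<Rightarrow> 'w \<times> 'h \<Rightarrow> real" where
  "log_ratio J x = ln (pmf J x / (pmf (map_pmf fst J) (fst x) * pmf (map_pmf snd J) (snd x)))"

definition info_density :: "('w \<times> 'h) pmf \<Rightarrow> 'w \<Rightarrow> 'h \<Rightarrow> ereal" where
  "info_density J w h = (if pmf J (w, h) = 0 then -\<infinity> else ereal (log_ratio J (w, h)))"

text \<open>Mutual information I(W;H) = E[\<iota>(W;H)], an extended real expectation
  (positive part minus negative part; the negative part is always finite).\<close>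
definition mutual_info_pmf :: "('w \<times> 'h) pmf \<Rightarrow> ereal" where
  "mutual_info_pmf J =
     enn2ereal (\<integral>\<^sup>+ x. ennreal (log_ratio J x) \<partial>measure_pmf J)
   - enn2ereal (\<integral>\<^sup>+ x. ennreal (- log_ratio J x) \<partial>measure_pmf J)"

definition avg_distortion ::
  "'w pmf \<Rightarrow> ('w \<Rightarrow> 't pmf) \<Rightarrow> ('t \<Rightarrow> 'h pmf) \<Rightarrow> ('w \<Rightarrow> 'h \<Rightarrow> real) \<Rightarrow> real" where
  "avg_distortion PW S A dst = measure_pmf.expectation (joint PW S A) (\<lambda>(w, h). dst w h)"

definition RD :: "nat \<Rightarrow> 'w pmf \<Rightarrow> (bool list list \<Rightarrow> 'h pmf) \<Rightarrow> ('w \<Rightarrow> 'h \<Rightarrow> real) \<Rightarrow> real \<Rightarrow> ereal" where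
  "RD b PW A dst \<delta> =
     (INF S \<in> {S. (\<forall>w. set_pmf (S w) \<subseteq> all_datasets b) \<and> avg_distortion PW S A dst \<le> \<delta>}.
        mutual_info_pmf (joint PW S A))"

definition dmin :: "nat \<Rightarrow> 'w pmf \<Rightarrow> (bool list list \<Rightarrow> 'h pmf) \<Rightarrow> ('w \<Rightarrow> 'h \<Rightarrow> real) \<Rightarrow> real" where
  "dmin b PW A dst = Inf {\<delta>. RD b PW A dst \<delta> < \<infinity>}"

definition tilted_info ::
  "'w pmf \<Rightarrow> (bool list list \<Rightarrow> 'h pmf) \<Rightarrow> ('w \<Rightarrow> 'h \<Rightarrow> real) \<Rightarrow> ('w \<Rightarrow> bool list list pmf)
     \<Rightarrow> real \<Rightarrow> real \<Rightarrow> 'w \<Rightarrow> 'h \<Rightarrow> ereal" where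
  "tilted_info PW A dst Sstar lam \<delta> w h =
     info_density (joint PW Sstar A) w h + ereal (lam * (dst w h - \<delta>))"

end

theory Submission
  imports Defs
begin

text \<open>Split the event \<open>\<jmath> \<ge> bn + \<gamma>\<close> according to whether the distortion exceeds \<open>d\<close>.
  The first part has probability at most \<open>\<epsilon>\<close>. On the second part \<open>\<lambda>*(d(w,h) - d) \<le> 0\<close>,
  so the information density \<open>\<iota>\<close> of the \<open>S*\<close>-joint law is at least \<open>bn + \<gamma>\<close>.
  Since \<open>S(w)\<close> ranges over the \<open>2^(bn)\<close> datasets of size \<open>n\<close>, the law of \<open>(W,H)\<close> is
  dominated by the sum over all datasets \<open>t\<close> of the product laws \<open>P_W \<times> P_(H|T=t)\<close>, and
  under any product \<open>P_W \<times> Q\<close> a change of measure gives \<open>P[\<iota> \<ge> c] \<le> e^(-c) E[exp \<iota>] \<le> e^(-c)\<close>.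
  Hence the second part has probability at most \<open>2^(bn) e^(-bn-\<gamma>) \<le> e^(-\<gamma>)\<close>.\<close>

definition density_ratio :: "('w \<times> 'h) pmf \<Rightarrow> 'w \<times> 'h \<Rightarrow> real" where
  "density_ratio J x = pmf J x / (pmf (map_pmf fst J) (fst x) * pmf (map_pmf snd J) (snd x))"

lemma log_ratio_eq_ln_density_ratio: "log_ratio J x = ln (density_ratio J x)"
  by (simp add: log_ratio_def density_ratio_def)

lemma map_fst_joint: "map_pmf fst (joint PW S A) = PW"
  by (simp add: joint_def map_bind_pmf map_pmf_comp o_def bind_return_pmf')

lemma density_ratio_pos:
  assumes "pmf J x > 0"
  shows "density_ratio J x > 0"
proof -
  have "x \<in> set_pmf J" using assms by (simp add: set_pmf_iff)
  then have "fst x \<in> set_pmf (map_pmf fst J)" "snd x \<in> set_pmf (map_pmf snd J)" by auto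
  then show ?thesis using assms by (simp add: density_ratio_def pmf_positive)
qed

lemma nn_integral_pmf_eq_pmf_map_snd:
  fixes J :: "('w::countable \<times> 'h) pmf"
  shows "(\<integral>\<^sup>+w. ennreal (pmf J (w, h)) \<partial>count_space UNIV) = ennreal (pmf (map_pmf snd J) h)"
proof -
  have "bij_betw (\<lambda>w. (w, h)) UNIV (snd -` {h})"
    by (auto simp: bij_betw_def inj_on_def image_def)
  then have "(\<integral>\<^sup>+w. ennreal (pmf J (w, h)) \<partial>count_space UNIV)
      = (\<integral>\<^sup>+x. ennreal (pmf J x) \<partial>count_space (snd -` {h}))"
    using nn_integral_bij_count_space by force
  also have "\<dots> = ennreal (pmf (map_pmf snd J) h)"
    by (simp add: nn_integral_pmf pmf_map measure_pmf.emeasure_eq_measure)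
  finally show ?thesis .
qed

lemma nn_integral_density_ratio_fst_le_1:
  fixes J :: "('w::countable \<times> 'h) pmf"
  shows "(\<integral>\<^sup>+w. ennreal (density_ratio J (w, h)) \<partial>map_pmf fst J) \<le> 1"
proof -
  define p where "p = pmf (map_pmf snd J) h"
  have weighted: "ennreal (pmf (map_pmf fst J) w) * ennreal (density_ratio J (w, h))
      = ennreal (pmf J (w, h)) * ennreal (1 / p)" for w
  proof (cases "pmf (map_pmf fst J) w = 0")
    case True
    then have "pmf J (w, h) = 0"
      by (metis fst_conv pmf_eq_0_set_pmf image_eqI set_map_pmf)
    with True show ?thesis by simp
  next
    case False
    then have "pmf (map_pmf fst J) w * density_ratio J (w, h) = pmf J (w, h) * (1 / p)"
      by (simp add: density_ratio_def p_def)
    then show ?thesis by (metis ennreal_mult' pmf_nonneg)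
  qed
  have "(\<integral>\<^sup>+w. ennreal (density_ratio J (w, h)) \<partial>map_pmf fst J)
      = (\<integral>\<^sup>+w. ennreal (pmf J (w, h)) \<partial>count_space UNIV) * ennreal (1 / p)"
    by (simp add: nn_integral_measure_pmf weighted nn_integral_multc)
  also have "\<dots> = ennreal p * ennreal (1 / p)"
    by (simp add: nn_integral_pmf_eq_pmf_map_snd p_def)
  also have "\<dots> = ennreal (p * (1 / p))"
    by (rule ennreal_mult'[symmetric]) (simp add: p_def)
  also have "\<dots> \<le> 1"
    by (cases "p = 0") simp_all
  finally show ?thesis .
qed

lemma nn_integral_density_ratio_pair_le_1:
  fixes J :: "('w::countable \<times> 'h) pmf"
  shows "(\<integral>\<^sup>+x. ennreal (density_ratio J x) \<partial>pair_pmf (map_pmf fst J) B) \<le> 1"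
proof -
  have "(\<integral>\<^sup>+x. ennreal (density_ratio J x) \<partial>pair_pmf (map_pmf fst J) B)
      = (\<integral>\<^sup>+h. \<integral>\<^sup>+w. ennreal (density_ratio J (w, h)) \<partial>map_pmf fst J \<partial>B)"
    by (subst pair_commute_pmf) (simp add: nn_integral_pair_pmf')
  also have "\<dots> \<le> (\<integral>\<^sup>+h. 1 \<partial>B)"
    by (intro nn_integral_mono nn_integral_density_ratio_fst_le_1)
  finally show ?thesis by simp
qed

lemma exp_le_density_ratio:
  assumes "pmf J x > 0" "log_ratio J x \<ge> c"
  shows "exp c \<le> density_ratio J x"
  using assms density_ratio_pos[OF assms(1)]
  by (metis exp_le_cancel_iff exp_ln log_ratio_eq_ln_density_ratio)

lemma prob_pair_log_ratio_ge_le_exp: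
  fixes J :: "('w::countable \<times> 'h) pmf"
  shows "measure_pmf.prob (pair_pmf (map_pmf fst J) B) {x. pmf J x > 0 \<and> log_ratio J x \<ge> c}
           \<le> exp (- c)"
proof -
  let ?F = "{x. pmf J x > 0 \<and> log_ratio J x \<ge> c}"
  have markov: "indicator ?F x \<le> ennreal (exp (- c)) * ennreal (density_ratio J x)" for x
  proof (cases "x \<in> ?F")
    case True
    then have "1 \<le> exp (- c) * density_ratio J x"
      using exp_le_density_ratio[of J x c] by (simp add: exp_minus field_simps)
    then show ?thesis
      using True by (simp add: ennreal_mult'[symmetric] ennreal_1[symmetric] del: ennreal_1)
  qed simp
  have "emeasure (pair_pmf (map_pmf fst J) B) ?F = (\<integral>\<^sup>+x. indicator ?F x \<partial>pair_pmf (map_pmf fst J) B)"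
    by simp
  also have "\<dots> \<le> (\<integral>\<^sup>+x. ennreal (exp (- c)) * ennreal (density_ratio J x) \<partial>pair_pmf (map_pmf fst J) B)"
    by (intro nn_integral_mono markov)
  also have "\<dots> \<le> ennreal (exp (- c)) * 1"
    using mult_left_mono[OF nn_integral_density_ratio_pair_le_1[of J B], of "ennreal (exp (- c))"]
    by (simp add: nn_integral_cmult)
  finally show ?thesis
    by (simp add: measure_pmf.emeasure_eq_measure)
qed

lemma emeasure_joint_le_sum_pair:
  assumes D: "finite D" and S: "\<forall>w\<in>set_pmf PW. set_pmf (S w) \<subseteq> D"
  shows "emeasure (joint PW S A) E \<le> (\<Sum>t\<in>D. emeasure (pair_pmf PW (A t)) E)"
proof -
  let ?e = "\<lambda>w t. emeasure (A t) (Pair w -` E)"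
  have inner: "(\<integral>\<^sup>+t. ?e w t \<partial>S w) \<le> (\<Sum>t\<in>D. ?e w t)" if w: "w \<in> set_pmf PW" for w
  proof -
    have sub: "set_pmf (S w) \<subseteq> D" using S w by blast
    have "(\<integral>\<^sup>+t. ?e w t \<partial>S w) = (\<Sum>t\<in>set_pmf (S w). ennreal (pmf (S w) t) * ?e w t)"
      using nn_integral_measure_pmf_finite[of "S w" "?e w"] finite_subset[OF sub D]
      by (simp add: mult.commute)
    also have "\<dots> \<le> (\<Sum>t\<in>set_pmf (S w). ?e w t)"
      by (intro sum_mono) (metis ennreal_le_1 mult_1 mult_right_mono pmf_le_1 zero_le)
    also have "\<dots> \<le> (\<Sum>t\<in>D. ?e w t)"
      by (intro sum_mono2 D sub) simp
    finally show ?thesis .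
  qed
  have "emeasure (joint PW S A) E = (\<integral>\<^sup>+w. \<integral>\<^sup>+t. ?e w t \<partial>S w \<partial>PW)"
    by (simp add: joint_def)
  also have "\<dots> \<le> (\<integral>\<^sup>+w. (\<Sum>t\<in>D. ?e w t) \<partial>PW)"
    by (intro nn_integral_mono_AE AE_pmfI inner)
  also have "\<dots> = (\<Sum>t\<in>D. \<integral>\<^sup>+w. ?e w t \<partial>PW)"
    by (simp add: nn_integral_sum)
  also have "\<dots> = (\<Sum>t\<in>D. emeasure (pair_pmf PW (A t)) E)"
  proof (intro sum.cong refl)
    fix t
    have "?e w t = (\<integral>\<^sup>+h. indicator E (w, h) \<partial>A t)" for w
      by (simp flip: nn_integral_indicator indicator_vimage)
    then show "(\<integral>\<^sup>+w. ?e w t \<partial>PW) = emeasure (pair_pmf PW (A t)) E"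
      by (simp add: pair_pmf_def)
  qed
  finally show ?thesis .
qed

lemma prob_joint_log_ratio_ge_le_card:
  fixes J :: "('w::countable \<times> 'h) pmf"
  assumes "map_pmf fst J = PW" "finite D" "\<forall>w\<in>set_pmf PW. set_pmf (S w) \<subseteq> D"
  shows "measure_pmf.prob (joint PW S A) {x. pmf J x > 0 \<and> log_ratio J x \<ge> c}
           \<le> card D * exp (- c)"
proof -
  let ?F = "{x. pmf J x > 0 \<and> log_ratio J x \<ge> c}"
  have "ennreal (measure_pmf.prob (joint PW S A) ?F) \<le> (\<Sum>t\<in>D. emeasure (pair_pmf PW (A t)) ?F)"
    using emeasure_joint_le_sum_pair[OF assms(2,3)] by (simp add: measure_pmf.emeasure_eq_measure)
  also have "\<dots> \<le> (\<Sum>t\<in>D. ennreal (exp (- c)))"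
    using prob_pair_log_ratio_ge_le_exp[of J _ c] assms(1)
    by (intro sum_mono) (simp add: measure_pmf.emeasure_eq_measure)
  also have "\<dots> = ennreal (card D * exp (- c))"
    by (simp add: ennreal_mult' ennreal_of_nat_eq_real_of_nat)
  finally show ?thesis by simp
qed

lemma card_datasets: "card (datasets b n) = 2 ^ (b * n)"
  and finite_datasets: "finite (datasets b n)"
proof -
  define words where "words = {xs :: bool list. length xs = b}"
  have words: "finite words" "card words = 2 ^ b"
    using finite_lists_length_eq[of "UNIV :: bool set" b] card_lists_length_eq[of "UNIV :: bool set" b]
    by (simp_all add: words_def)
  have "datasets b n = {t. set t \<subseteq> words \<and> length t = n}"
    by (auto simp: datasets_def words_def)
  then show "card (datasets b n) = 2 ^ (b * n)" "finite (datasets b n)"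
    by (simp_all add: words card_lists_length_eq finite_lists_length_eq power_mult)
qed

lemma two_pow_le_exp: "(2::real) ^ m \<le> exp (real m)"
proof -
  have "(2::real) ^ m \<le> exp 1 ^ m"
    using exp_ge_add_one_self[of 1] by (intro power_mono) auto
  then show ?thesis by (simp add: exp_of_nat_mult[symmetric])
qed

lemma tilted_info_ge_imp_log_ratio_ge:
  assumes "tilted_info PW A dst Sstar lam \<delta> w h \<ge> ereal c" "lam \<ge> 0" "dst w h \<le> \<delta>"
  defines "J \<equiv> joint PW Sstar A"
  shows "pmf J (w, h) > 0 \<and> log_ratio J (w, h) \<ge> c"
proof -
  have "lam * (dst w h - \<delta>) \<le> 0"
    using assms(2,3) by (simp add: mult_nonneg_nonpos)
  moreover have "pmf J (w, h) \<noteq> 0" and "c \<le> log_ratio J (w, h) + lam * (dst w h - \<delta>)"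
    using assms(1) by (auto simp: tilted_info_def info_density_def J_def split: if_splits)
  ultimately show ?thesis by simp
qed

theorem theorem1:
  fixes PW :: "'w::countable pmf"
    and A :: "bool list list \<Rightarrow> 'h::countable pmf"
    and dst :: "'w \<Rightarrow> 'h \<Rightarrow> real"
    and b n :: nat
    and \<delta> \<epsilon> lam :: real
    and S Sstar :: "'w \<Rightarrow> bool list list pmf"
  assumes b_pos: "b > 0"
    and dist_nonneg: "\<forall>w h. 0 \<le> dst w h"
    and dist_bounded: "\<exists>B. \<forall>w h. dst w h \<le> B"
    and dmin_exists: "{x. RD b PW A dst x < \<infinity>} \<noteq> {}"
    and d_gt: "\<delta> > dmin b PW A dst"
    and Sstar_valid: "\<forall>w. set_pmf (Sstar w) \<subseteq> all_datasets b"
    and Sstar_dist: "avg_distortion PW Sstar A dst = \<delta>"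
    and Sstar_opt: "mutual_info_pmf (joint PW Sstar A) = RD b PW A dst \<delta>"
    and lam_deriv: "((\<lambda>x. real_of_ereal (RD b PW A dst x)) has_real_derivative (- lam)) (at \<delta>)"
    and lam_pos: "lam > 0"
    and n_pos: "n > 0"
    and eps: "0 \<le> \<epsilon>" "\<epsilon> \<le> 1"
    and S_size: "\<forall>w\<in>set_pmf PW. set_pmf (S w) \<subseteq> datasets b n"
    and S_err: "measure_pmf.prob (joint PW S A) {(w, h). dst w h > \<delta>} \<le> \<epsilon>"
  shows "(SUP \<gamma>\<in>{0..}. measure_pmf.prob (joint PW S A)
            {(w, h). tilted_info PW A dst Sstar lam \<delta> w h \<ge> ereal (real (b * n) + \<gamma>)}
          - exp (- \<gamma>)) \<le> \<epsilon>"
proof (rule cSUP_least)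
  show "{0::real..} \<noteq> {}" by simp
next
  fix \<gamma> :: real
  let ?J = "joint PW S A" and ?J' = "joint PW Sstar A"
  let ?E = "{(w, h). tilted_info PW A dst Sstar lam \<delta> w h \<ge> ereal (real (b * n) + \<gamma>)}"
  let ?D = "{(w, h). dst w h > \<delta>}"
  let ?F = "{x. pmf ?J' x > 0 \<and> log_ratio ?J' x \<ge> real (b * n) + \<gamma>}"
  have "?E \<subseteq> ?D \<union> ?F"
    using tilted_info_ge_imp_log_ratio_ge[of _ PW A dst Sstar lam \<delta>] lam_pos
    by (fastforce simp: not_less)
  then have "measure_pmf.prob ?J ?E \<le> measure_pmf.prob ?J (?D \<union> ?F)"
    by (rule measure_pmf.finite_measure_mono) simp
  also have "\<dots> \<le> measure_pmf.prob ?J ?D + measure_pmf.prob ?J ?F"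
    by (rule measure_Un_le) simp_all
  also have "measure_pmf.prob ?J ?F \<le> 2 ^ (b * n) * exp (- (real (b * n) + \<gamma>))"
    using prob_joint_log_ratio_ge_le_card[OF map_fst_joint[of PW Sstar A] finite_datasets S_size,
        where A = A and c = "real (b * n) + \<gamma>"]
    by (simp add: card_datasets)
  also have "\<dots> \<le> exp (- \<gamma>)"
    using mult_right_mono[OF two_pow_le_exp[of "b * n"], of "exp (- (real (b * n) + \<gamma>))"]
    by (simp add: exp_add[symmetric])
  finally show "measure_pmf.prob ?J ?E - exp (- \<gamma>) \<le> \<epsilon>"
    using S_err by simp
qed

end
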